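(* Let $a\in C^1([0,T]\times[-\pi,\pi])$ solve $$\partial_t a+\Big(\int_{-\pi}^x a(t,\bar x)\,d\bar x\Big)\partial_x a-a^2+\frac1\pi\int_{-\pi}^{\pi}a^2\,dx=0,\qquad \int_{-\pi}^\pi a(t,x)dx=0.$$ Assume $x\mapsto a(0,x)$ attains its maximum at $x_0^*$. Then for all $t\in[0,T]$, $x\mapsto a(t,x)$ attains its maximum at $x^*(t)$, where $x^*$ is the characteristic starting from $x_0^*$.
   Context: The characteristic starting from $x_0^*$ is the solution of $\frac{d}{dt}x^*(t)=\int_{-\pi}^{x^*(t)}a(t,x)\,dx$, $x^*(0)=x_0^*$. *)

theory Defs
  imports "HOL-Analysis.Analysis"
begin

definition characteristic ::
  "(real \<Rightarrow> real \<Rightarrow> real) \<Rightarrow> real \<Rightarrow> real \<Rightarrow> (real \<Rightarrow> real) \<Rightarrow> bool" where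
  "characteristic a T x0 xs \<longleftrightarrow>
     xs 0 = x0 \<and>
     (\<forall>t\<in>{0..T}. xs t \<in> {-pi..pi} \<and>
        (xs has_real_derivative integral {-pi..xs t} (a t)) (at t within {0..T}))"

end

theory Submission
  imports Defs
begin

text \<open>Let f(t) = a(t, x*(t)) and I(t) = (1/pi) \<integral> a(t,.)^2. By the equation, f' = f^2 - I along
  the characteristic, and also \<partial>a/\<partial>t = M^2 - I at any point where a(t,.) attains its maximum M,
  because the transport term vanishes there: \<partial>a/\<partial>x = 0 in the interior, while the integral of a
  from -pi to x is 0 at both endpoints by the zero mean. So u = a - f satisfies
  \<partial>u/\<partial>t = (M - f)(M + f) \<le> 2B u at spatial maxima, where B bounds |a|, and u(0,.) \<le> 0.
  A maximum principle keeps u \<le> 0: at the first time at which exp(-(2B+1)t) u reaches a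
  positive level, its time derivative at a spatial maximum would be both nonnegative and negative.\<close>

lemma has_real_derivative_along_curve:
  fixes a :: "real \<Rightarrow> real \<Rightarrow> real" and \<gamma> :: "real \<Rightarrow> real"
  assumes a: "((\<lambda>(t, x). a t x) has_derivative (\<lambda>(h, k). A\<^sub>t * h + A\<^sub>x * k))
      (at (t, \<gamma> t) within S \<times> X)"
    and \<gamma>: "(\<gamma> has_real_derivative d) (at t within S)"
    and "\<gamma> ` S \<subseteq> X"
  shows "((\<lambda>\<tau>. a \<tau> (\<gamma> \<tau>)) has_real_derivative A\<^sub>t + A\<^sub>x * d) (at t within S)"
proof -
  have graph: "((\<lambda>\<tau>. (\<tau>, \<gamma> \<tau>)) has_derivative (\<lambda>h. (h, h * d))) (at t within S)"
    using \<gamma> by (auto intro!: derivative_eq_intros simp: has_field_derivative_def mult.commute)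
  have "((\<lambda>(t, x). a t x) has_derivative (\<lambda>(h, k). A\<^sub>t * h + A\<^sub>x * k))
      (at (t, \<gamma> t) within (\<lambda>\<tau>. (\<tau>, \<gamma> \<tau>)) ` S)"
    using a by (rule has_derivative_subset) (use assms(3) in auto)
  from diff_chain_within[OF graph this]
  have "((\<lambda>\<tau>. a \<tau> (\<gamma> \<tau>)) has_derivative (\<lambda>h. A\<^sub>t * h + A\<^sub>x * (h * d))) (at t within S)"
    by (simp add: o_def)
  then show ?thesis
    unfolding has_field_derivative_def
    by (rule has_derivative_eq_rhs) (simp add: fun_eq_iff algebra_simps)
qed

lemma has_real_derivative_partial_snd:
  fixes a :: "real \<Rightarrow> real \<Rightarrow> real"
  assumes a: "((\<lambda>(t, x). a t x) has_derivative (\<lambda>(h, k). A\<^sub>t * h + A\<^sub>x * k))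
      (at (t, x) within S \<times> X)"
    and "t \<in> S"
  shows "(a t has_real_derivative A\<^sub>x) (at x within X)"
proof -
  have slice: "((\<lambda>y. (t, y)) has_derivative (\<lambda>k. (0, k))) (at x within X)"
    by (auto intro!: derivative_eq_intros)
  have "((\<lambda>(t, x). a t x) has_derivative (\<lambda>(h, k). A\<^sub>t * h + A\<^sub>x * k))
      (at (t, x) within (\<lambda>y. (t, y)) ` X)"
    using a by (rule has_derivative_subset) (use assms(2) in auto)
  from diff_chain_within[OF slice this]
  show ?thesis
    by (simp add: has_field_derivative_def o_def)
qed

lemma integral_upto_max_times_deriv_eq_0:
  fixes g :: "real \<Rightarrow> real"
  assumes g: "(g has_real_derivative D) (at x within {l..u})" and x: "x \<in> {l..u}"
    and max: "\<forall>y\<in>{l..u}. g y \<le> g x" and mean0: "integral {l..u} g = 0"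
  shows "integral {l..x} g * D = 0"
proof -
  consider "x = l" | "x = u" | "l < x" "x < u"
    using x by fastforce
  then show ?thesis
  proof cases
    case 3
    then have "(g has_real_derivative D) (at x)"
      using g by (simp add: at_within_Icc_at)
    moreover have "\<forall>y. \<bar>x - y\<bar> < min (x - l) (u - x) \<longrightarrow> g y \<le> g x"
      using max by (auto simp: abs_less_iff)
    ultimately have "D = 0"
      using DERIV_local_max[where f = g and x = x and l = D and d = "min (x - l) (u - x)"] 3 by simp
    then show ?thesis by simp
  qed (use mean0 in auto)
qed

lemma first_time_reaching_level:
  fixes w :: "real \<Rightarrow> 'a::metric_space \<Rightarrow> real"
  assumes X: "compact X" and w: "continuous_on ({0..t\<^sub>1} \<times> X) (\<lambda>(t, x). w t x)"
    and "t\<^sub>1 \<ge> 0" "x\<^sub>1 \<in> X" "w t\<^sub>1 x\<^sub>1 \<ge> c"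
  obtains s x where "s \<in> {0..t\<^sub>1}" "x \<in> X" "w s x \<ge> c" "\<forall>t\<in>{0..<s}. \<forall>y\<in>X. w t y < c"
proof -
  define P where "P = {p \<in> {0..t\<^sub>1} \<times> X. c \<le> (\<lambda>(t, x). w t x) p}"
  have "closed P"
    unfolding P_def
    by (rule continuous_on_closed_Collect_le[OF continuous_on_const w])
      (simp add: X compact_Times compact_imp_closed)
  then have "compact ({0..t\<^sub>1} \<times> X \<inter> P)"
    by (intro compact_Int_closed compact_Times compact_Icc X)
  moreover have "{0..t\<^sub>1} \<times> X \<inter> P = P"
    unfolding P_def by blast
  ultimately have "compact P"
    by simp
  then have "compact (fst ` P)"
    by (intro compact_continuous_image continuous_intros)
  moreover have "t\<^sub>1 \<in> fst ` P"
    using assms(3-5) unfolding P_def by force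
  ultimately obtain s where s: "s \<in> fst ` P" and first: "\<forall>t\<in>fst ` P. s \<le> t"
    using compact_attains_inf by blast
  from s obtain x where "s \<in> {0..t\<^sub>1}" "x \<in> X" "w s x \<ge> c"
    unfolding P_def by auto
  moreover have "\<forall>t\<in>{0..<s}. \<forall>y\<in>X. w t y < c"
    using first \<open>s \<in> {0..t\<^sub>1}\<close> unfolding P_def by force
  ultimately show thesis by (rule that)
qed

lemma maximum_principle_nonpos:
  fixes u :: "real \<Rightarrow> 'a::metric_space \<Rightarrow> real"
  assumes X: "compact X" and u: "continuous_on ({0..T} \<times> X) (\<lambda>(t, x). u t x)"
    and init: "\<forall>x\<in>X. u 0 x \<le> 0"
    and growth: "\<And>s x. s \<in> {0<..T} \<Longrightarrow> x \<in> X \<Longrightarrow> \<forall>y\<in>X. u s y \<le> u s x \<Longrightarrow> 0 < u s x \<Longrightarrow>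
        \<exists>D. ((\<lambda>t. u t x) has_real_derivative D) (at s within {0..T}) \<and> D \<le> K * u s x"
    and t: "t \<in> {0..T}" and x: "x \<in> X"
  shows "u t x \<le> 0"
proof (rule ccontr)
  assume "\<not> u t x \<le> 0"
  define w where "w \<tau> y = exp (- (K + 1) * \<tau>) * u \<tau> y" for \<tau> y
  have "w t x > 0"
    using \<open>\<not> u t x \<le> 0\<close> by (simp add: w_def)
  have "continuous_on ({0..t} \<times> X) (\<lambda>(\<tau>, y). w \<tau> y)"
    unfolding w_def case_prod_beta'
    by (intro continuous_intros continuous_on_subset[OF u[unfolded case_prod_beta']]) (use t in auto)
  moreover have "t \<ge> 0"
    using t by simp
  ultimately obtain s x\<^sub>w where s: "s \<in> {0..t}" and x\<^sub>w: "x\<^sub>w \<in> X" "w s x\<^sub>w \<ge> w t x"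
    and before: "\<forall>\<tau>\<in>{0..<s}. \<forall>y\<in>X. w \<tau> y < w t x"
    using first_time_reaching_level[OF X _ _ x order.refl] by metis
  have "s \<noteq> 0"
    using init x\<^sub>w \<open>w t x > 0\<close> by (auto simp: w_def)
  with s t have s_pos: "s \<in> {0<..T}"
    by auto
  have "continuous_on X (\<lambda>y. (\<lambda>(\<tau>, y). u \<tau> y) (s, y))"
    by (rule continuous_on_compose2[OF u]) (use s_pos in \<open>auto intro!: continuous_intros\<close>)
  then obtain x\<^sub>m where x\<^sub>m: "x\<^sub>m \<in> X" and max: "\<forall>y\<in>X. u s y \<le> u s x\<^sub>m"
    using continuous_attains_sup[OF X, of "u s"] x\<^sub>w by auto
  then have "w s x\<^sub>m \<ge> w s x\<^sub>w"
    using x\<^sub>w by (simp add: w_def)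
  then have "w s x\<^sub>m > 0"
    using x\<^sub>w \<open>w t x > 0\<close> by linarith
  then have "u s x\<^sub>m > 0"
    by (simp add: w_def zero_less_mult_iff)
  with growth[OF s_pos x\<^sub>m max] obtain D
    where D: "((\<lambda>\<tau>. u \<tau> x\<^sub>m) has_real_derivative D) (at s within {0..T})" "D \<le> K * u s x\<^sub>m"
    by blast
  have "((\<lambda>\<tau>. w \<tau> x\<^sub>m) has_real_derivative exp (- (K + 1) * s) * (D - (K + 1) * u s x\<^sub>m))
      (at s within {0..T})"
    unfolding w_def by (auto intro!: derivative_eq_intros D(1) simp: algebra_simps)
  moreover have "exp (- (K + 1) * s) * (D - (K + 1) * u s x\<^sub>m) < 0"
    using D(2) \<open>u s x\<^sub>m > 0\<close> by (intro mult_pos_neg) (auto simp: algebra_simps)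
  ultimately obtain d where "d > 0"
    and decreasing: "\<forall>h>0. s - h \<in> {0..T} \<longrightarrow> h < d \<longrightarrow> w s x\<^sub>m < w (s - h) x\<^sub>m"
    using has_real_derivative_neg_dec_left by blast
  define h where "h = min s (d / 2)"
  have "w s x\<^sub>m < w (s - h) x\<^sub>m"
    using decreasing s_pos \<open>d > 0\<close> by (auto simp: h_def)
  moreover have "w (s - h) x\<^sub>m < w t x"
    using before x\<^sub>m s_pos \<open>d > 0\<close> by (auto simp: h_def)
  ultimately show False
    using \<open>w s x\<^sub>m \<ge> w s x\<^sub>w\<close> x\<^sub>w by linarith
qed

locale pde_solution =
  fixes a a_t a_x :: "real \<Rightarrow> real \<Rightarrow> real" and T :: real
  assumes differentiable: "\<forall>p\<in>{0..T} \<times> {-pi..pi}.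
      ((\<lambda>(t, x). a t x) has_derivative (\<lambda>(h, k). a_t (fst p) (snd p) * h + a_x (fst p) (snd p) * k))
        (at p within {0..T} \<times> {-pi..pi})"
    and pde: "\<forall>t\<in>{0..T}. \<forall>x\<in>{-pi..pi}.
      a_t t x + integral {-pi..x} (a t) * a_x t x - (a t x)\<^sup>2
        + (1 / pi) * integral {-pi..pi} (\<lambda>y. (a t y)\<^sup>2) = 0"
    and mean0: "\<forall>t\<in>{0..T}. integral {-pi..pi} (a t) = 0"
begin

abbreviation nonlocal_term :: "real \<Rightarrow> real" where
  "nonlocal_term t \<equiv> (1 / pi) * integral {-pi..pi} (\<lambda>y. (a t y)\<^sup>2)"

lemma has_derivative_on_rectangle:
  assumes "t \<in> {0..T}" "x \<in> {-pi..pi}"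
  shows "((\<lambda>(t, x). a t x) has_derivative (\<lambda>(h, k). a_t t x * h + a_x t x * k))
      (at (t, x) within {0..T} \<times> {-pi..pi})"
  using differentiable assms by fastforce

lemma continuous_on_rectangle: "continuous_on ({0..T} \<times> {-pi..pi}) (\<lambda>(t, x). a t x)"
  using differentiable has_derivative_continuous continuous_on_eq_continuous_within by blast

lemma bounded_on_rectangle:
  obtains B where "\<forall>t\<in>{0..T}. \<forall>x\<in>{-pi..pi}. \<bar>a t x\<bar> \<le> B"
proof -
  have "compact ((\<lambda>(t, x). a t x) ` ({0..T} \<times> {-pi..pi}))"
    by (intro compact_continuous_image continuous_on_rectangle compact_Times compact_Icc)
  then obtain B where "\<forall>y\<in>(\<lambda>(t, x). a t x) ` ({0..T} \<times> {-pi..pi}). \<bar>y\<bar> \<le> B"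
    using compact_imp_bounded bounded_real by meson
  then show thesis
    by (intro that) auto
qed

lemma has_real_derivative_along_characteristic:
  assumes char: "characteristic a T x0 xs" and t: "t \<in> {0..T}"
  shows "((\<lambda>t. a t (xs t)) has_real_derivative (a t (xs t))\<^sup>2 - nonlocal_term t) (at t within {0..T})"
proof -
  have xs: "xs ` {0..T} \<subseteq> {-pi..pi}" "xs t \<in> {-pi..pi}"
    "(xs has_real_derivative integral {-pi..xs t} (a t)) (at t within {0..T})"
    using char t by (auto simp: characteristic_def)
  have "((\<lambda>t. a t (xs t)) has_real_derivative
      a_t t (xs t) + a_x t (xs t) * integral {-pi..xs t} (a t)) (at t within {0..T})"
    by (rule has_real_derivative_along_curve[OF has_derivative_on_rectangle xs(3) xs(1)])
      (use t xs(2) in auto)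
  moreover have "a_t t (xs t) + a_x t (xs t) * integral {-pi..xs t} (a t) = (a t (xs t))\<^sup>2 - nonlocal_term t"
    using pde t xs(2) by (force simp: mult.commute)
  ultimately show ?thesis
    by simp
qed

lemma has_real_derivative_at_max:
  assumes s: "s \<in> {0..T}" and x: "x \<in> {-pi..pi}" and max: "\<forall>y\<in>{-pi..pi}. a s y \<le> a s x"
  shows "((\<lambda>t. a t x) has_real_derivative (a s x)\<^sup>2 - nonlocal_term s) (at s within {0..T})"
proof -
  have "((\<lambda>t. a t x) has_real_derivative a_t s x + a_x s x * 0) (at s within {0..T})"
    by (rule has_real_derivative_along_curve[where \<gamma> = "\<lambda>_. x"])
      (use has_derivative_on_rectangle s x in auto)
  moreover have "(a s has_real_derivative a_x s x) (at x within {-pi..pi})"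
    by (rule has_real_derivative_partial_snd[OF has_derivative_on_rectangle[OF s x] s])
  then have "integral {-pi..x} (a s) * a_x s x = 0"
    by (rule integral_upto_max_times_deriv_eq_0) (use x max mean0 s in auto)
  then have "a_t s x = (a s x)\<^sup>2 - nonlocal_term s"
    using pde s x by force
  ultimately show ?thesis
    by simp
qed

lemma continuous_on_relative_to_characteristic:
  assumes "characteristic a T x0 xs"
  shows "continuous_on ({0..T} \<times> {-pi..pi}) (\<lambda>(t, x). a t x - a t (xs t))"
proof -
  have "continuous_on {0..T} (\<lambda>t. a t (xs t))"
    using has_real_derivative_along_characteristic[OF assms] DERIV_continuous
      continuous_on_eq_continuous_within by blast
  then show ?thesis
    unfolding case_prod_beta'
    by (intro continuous_intros continuous_on_rectangle[unfolded case_prod_beta']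
        continuous_on_compose2[where f = fst]) auto
qed

lemma has_real_derivative_at_max_relative_to_characteristic:
  assumes "characteristic a T x0 xs"
    and "s \<in> {0..T}" "x \<in> {-pi..pi}" "\<forall>y\<in>{-pi..pi}. a s y \<le> a s x"
  shows "((\<lambda>t. a t x - a t (xs t)) has_real_derivative (a s x)\<^sup>2 - (a s (xs s))\<^sup>2)
    (at s within {0..T})"
  using DERIV_diff[OF has_real_derivative_at_max has_real_derivative_along_characteristic] assms
  by simp

end

theorem lemma2p3:
  fixes a a_t a_x :: "real \<Rightarrow> real \<Rightarrow> real" and T x0 :: real and xs :: "real \<Rightarrow> real"
  assumes C1: "\<forall>p\<in>{0..T} \<times> {-pi..pi}.
      ((\<lambda>(t, x). a t x) has_derivative (\<lambda>(h, k). a_t (fst p) (snd p) * h + a_x (fst p) (snd p) * k))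
        (at p within {0..T} \<times> {-pi..pi})"
    and cont_t: "continuous_on ({0..T} \<times> {-pi..pi}) (\<lambda>(t, x). a_t t x)"
    and cont_x: "continuous_on ({0..T} \<times> {-pi..pi}) (\<lambda>(t, x). a_x t x)"
    and pde: "\<forall>t\<in>{0..T}. \<forall>x\<in>{-pi..pi}.
      a_t t x + integral {-pi..x} (a t) * a_x t x - (a t x)\<^sup>2
        + (1 / pi) * integral {-pi..pi} (\<lambda>y. (a t y)\<^sup>2) = 0"
    and mean0: "\<forall>t\<in>{0..T}. integral {-pi..pi} (a t) = 0"
    and x0_in: "x0 \<in> {-pi..pi}"
    and x0_max: "\<forall>x\<in>{-pi..pi}. a 0 x \<le> a 0 x0"
    and char: "characteristic a T x0 xs"
  shows "\<forall>t\<in>{0..T}. \<forall>x\<in>{-pi..pi}. a t x \<le> a t (xs t)"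
proof -
  interpret pde_solution a a_t a_x T
    using C1 pde mean0 by unfold_locales
  obtain B where B: "\<forall>t\<in>{0..T}. \<forall>x\<in>{-pi..pi}. \<bar>a t x\<bar> \<le> B"
    using bounded_on_rectangle by blast
  define u where "u t x = a t x - a t (xs t)" for t x
  have cont: "continuous_on ({0..T} \<times> {-pi..pi}) (\<lambda>(t, x). u t x)"
    unfolding u_def by (rule continuous_on_relative_to_characteristic[OF char])
  have init: "\<forall>x\<in>{-pi..pi}. u 0 x \<le> 0"
    using x0_max char by (simp add: u_def characteristic_def)
  have growth: "\<exists>D. ((\<lambda>t. u t x) has_real_derivative D) (at s within {0..T}) \<and> D \<le> 2 * B * u s x"
    if s: "s \<in> {0<..T}" and x: "x \<in> {-pi..pi}" and max: "\<forall>y\<in>{-pi..pi}. u s y \<le> u s x"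
      and "0 < u s x" for s x
  proof (intro exI conjI)
    show "((\<lambda>t. u t x) has_real_derivative (a s x)\<^sup>2 - (a s (xs s))\<^sup>2) (at s within {0..T})"
      unfolding u_def
      by (rule has_real_derivative_at_max_relative_to_characteristic[OF char])
        (use s x max in \<open>auto simp: u_def\<close>)
    have "\<bar>a s x\<bar> \<le> B" "\<bar>a s (xs s)\<bar> \<le> B"
      using B s x char by (auto simp: characteristic_def)
    then have "u s x * (a s x + a s (xs s)) \<le> u s x * (2 * B)"
      using \<open>0 < u s x\<close> by (intro mult_left_mono) auto
    then show "(a s x)\<^sup>2 - (a s (xs s))\<^sup>2 \<le> 2 * B * u s x"
      by (simp add: u_def power2_eq_square algebra_simps)
  qed
  have "u t x \<le> 0" if "t \<in> {0..T}" "x \<in> {-pi..pi}" for t x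
    by (rule maximum_principle_nonpos[OF compact_Icc cont init growth that])
  then show ?thesis
    by (simp add: u_def)
qed

end
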